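(* For every finite graph $G$, the poset $\mathrm{X}(G)$ deformation retracts (on geometric realisations) onto its subposet $\mathrm{C}(G)$.
   Context: Graphs are finite and may have loops and multiple edges. Subgraphs are edge-induced (no isolated vertices), so a subgraph is identified with a subset of $E(G)$. A core subgraph of $G$ is a proper subgraph $H$ such that each connected component of $H$ has non-trivial fundamental group and no vertex of $H$ has valence one in $H$ (separating edges are allowed). $\mathrm{X}(G)$ is the poset, under inclusion, of proper non-empty subgraphs of $G$ at least one connected component of which has non-trivial fundamental group; $\mathrm{C}(G)$ is the poset of proper core subgraphs of $G$ under inclusion. *)

theory Defs
  imports "HOL-Analysis.Analysis"
begin

text \<open>A graph is given by a vertex set V, an edge set E and an endpoint map
  ends assigning to every edge its (unordered) pair of endpoints, encoded as an
  ordered pair; a loop has both endpoints equal.  A subgraph is identified with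
  its set of edges (edge-induced).\<close>

definition finite_graph :: "'v set \<Rightarrow> 'e set \<Rightarrow> ('e \<Rightarrow> 'v \<times> 'v) \<Rightarrow> bool" where
  "finite_graph V E ends \<longleftrightarrow> finite V \<and> finite E \<and> (\<forall>e\<in>E. fst (ends e) \<in> V \<and> snd (ends e) \<in> V)"

definition endpoints :: "('e \<Rightarrow> 'v \<times> 'v) \<Rightarrow> 'e \<Rightarrow> 'v set" where
  "endpoints ends e = {fst (ends e), snd (ends e)}"

definition sub_verts :: "('e \<Rightarrow> 'v \<times> 'v) \<Rightarrow> 'e set \<Rightarrow> 'v set" where
  "sub_verts ends H = (\<Union>e\<in>H. endpoints ends e)"

text \<open>Valence of v in H: number of edge-ends at v (a loop contributes 2).\<close>
definition valence :: "('e \<Rightarrow> 'v \<times> 'v) \<Rightarrow> 'e set \<Rightarrow> 'v \<Rightarrow> nat" where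
  "valence ends H v = card {e\<in>H. fst (ends e) = v} + card {e\<in>H. snd (ends e) = v}"

definition edge_adj :: "('e \<Rightarrow> 'v \<times> 'v) \<Rightarrow> 'e set \<Rightarrow> ('e \<times> 'e) set" where
  "edge_adj ends H = {(e, f). e \<in> H \<and> f \<in> H \<and> endpoints ends e \<inter> endpoints ends f \<noteq> {}}"

definition components :: "('e \<Rightarrow> 'v \<times> 'v) \<Rightarrow> 'e set \<Rightarrow> 'e set set" where
  "components ends H = {{f \<in> H. (e, f) \<in> (edge_adj ends H)\<^sup>*} | e. e \<in> H}"

text \<open>A finite connected graph with edge set C has fundamental group free of
  rank |E| - |V| + 1; hence it is non-trivial iff |E| >= |V|, i.e. iff the
  component is not a tree.\<close>
definition nontrivial_pi1 :: "('e \<Rightarrow> 'v \<times> 'v) \<Rightarrow> 'e set \<Rightarrow> bool" where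
  "nontrivial_pi1 ends C \<longleftrightarrow> card (sub_verts ends C) \<le> card C"

definition X_poset :: "('e \<Rightarrow> 'v \<times> 'v) \<Rightarrow> 'e set \<Rightarrow> 'e set set" where
  "X_poset ends E = {H. H \<subseteq> E \<and> H \<noteq> E \<and> H \<noteq> {} \<and>
      (\<exists>C\<in>components ends H. nontrivial_pi1 ends C)}"

definition core_subgraph :: "('e \<Rightarrow> 'v \<times> 'v) \<Rightarrow> 'e set \<Rightarrow> 'e set \<Rightarrow> bool" where
  "core_subgraph ends E H \<longleftrightarrow> H \<subseteq> E \<and> H \<noteq> E \<and> H \<noteq> {} \<and>
      (\<forall>C\<in>components ends H. nontrivial_pi1 ends C) \<and>
      (\<forall>v\<in>sub_verts ends H. valence ends H v \<noteq> 1)"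

definition C_poset :: "('e \<Rightarrow> 'v \<times> 'v) \<Rightarrow> 'e set \<Rightarrow> 'e set set" where
  "C_poset ends E = {H. core_subgraph ends E H}"

text \<open>Points of the realisation of the order complex of P: weight functions
  t >= 0, vanishing outside P, summing to 1 over P, whose support is a chain.
  The topology is the subspace topology of the product topology on functions,
  which on these points agrees with the Euclidean topology of the finitely many
  coordinates in P.  For a subposet Q of P, the realisation of Q is then
  literally the subspace of points supported in Q.\<close>
definition realisation_points :: "'a set set \<Rightarrow> ('a set \<Rightarrow> real) set" where
  "realisation_points P = {t. (\<forall>x. 0 \<le> t x) \<and> (\<forall>x. x \<notin> P \<longrightarrow> t x = 0) \<and>
      sum t P = 1 \<and> (\<forall>x\<in>P. \<forall>y\<in>P. 0 < t x \<and> 0 < t y \<longrightarrow> x \<subseteq> y \<or> y \<subseteq> x)}"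

definition realisation :: "'a set set \<Rightarrow> ('a set \<Rightarrow> real) topology" where
  "realisation P = subtopology (powertop_real UNIV) (realisation_points P)"

definition deformation_retract_space :: "'a set \<Rightarrow> 'a topology \<Rightarrow> bool" where
  "deformation_retract_space S X \<longleftrightarrow> S \<subseteq> topspace X \<and>
     (\<exists>r. homotopic_with (\<lambda>h. \<forall>x\<in>S. h x = x) X X id r \<and>
          retraction_maps X (subtopology X S) r id)"

end

theory Submission
  imports Defs
begin

text \<open>The core of H, the union of all subgraphs of H in which no vertex has valence one, is
  itself such a subgraph. It is non-empty as soon as some component of H satisfies |V| \<le> |E|,
  because pruning a leaf preserves this inequality and so never empties the component. Hence
  H \<mapsto> core H maps X(G) monotonically into C(G), with core H \<subseteq> H and core H = H on C(G).
  For any such map f on a finite poset of sets, the realisation deformation retracts onto that of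
  the image: lay out the weights of a point along its supporting chain, smallest set first, and at
  time s move the part of each weight lying below level s from x to f x. Supports remain chains
  because a set x whose weight has started to move lies below every set y whose weight has not
  finished moving, so f x \<subseteq> x \<subseteq> y.\<close>

section \<open>Realisations of finite posets of sets\<close>

lemma realisation_pointsD:
  assumes "t \<in> realisation_points P"
  shows "0 \<le> t x" "x \<notin> P \<Longrightarrow> t x = 0" "sum t P = 1"
    "\<lbrakk>x \<in> P; y \<in> P; 0 < t x; 0 < t y\<rbrakk> \<Longrightarrow> x \<subseteq> y \<or> y \<subseteq> x"
  using assms unfolding realisation_points_def by auto

lemma realisation_points_support:
  assumes "t \<in> realisation_points P" "0 < t x"
  shows "x \<in> P"
  using realisation_pointsD(2)[OF assms(1), of x] assms(2) by (cases "x \<in> P") simp_all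

lemma realisation_points_support_chain:
  assumes "t \<in> realisation_points P" "0 < t x" "0 < t y"
  shows "x \<subseteq> y \<or> y \<subseteq> x"
  using realisation_pointsD(4)[OF assms(1) realisation_points_support[OF assms(1,2)]
      realisation_points_support[OF assms(1,3)] assms(2,3)] .

lemma realisation_points_mono:
  assumes "finite P" "Q \<subseteq> P"
  shows "realisation_points Q \<subseteq> realisation_points P"
proof
  fix t assume t: "t \<in> realisation_points Q"
  have "sum t P = sum t Q"
    using t assms unfolding realisation_points_def by (intro sum.mono_neutral_right) auto
  moreover have "x \<in> Q" if "0 < t x" for x
    using t that by (rule realisation_points_support)
  ultimately show "t \<in> realisation_points P"
    using t assms(2) unfolding realisation_points_def by (simp add: subset_eq) (meson less_le_not_le)
qed

lemma topspace_realisation [simp]: "topspace (realisation P) = realisation_points P"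
  unfolding realisation_def by simp

lemma continuous_map_realisation_coordinate:
  "continuous_map (realisation P) euclideanreal (\<lambda>t. t x)"
  unfolding realisation_def
  by (rule continuous_map_from_subtopology)
    (rule continuous_map_product_projection[where X = "\<lambda>_. euclideanreal", OF UNIV_I])

locale deflationary_retraction =
  fixes P Q :: "'a set set" and f :: "'a set \<Rightarrow> 'a set"
  assumes finite_P: "finite P" and Q_subset_P: "Q \<subseteq> P"
    and f_into_Q: "x \<in> P \<Longrightarrow> f x \<in> Q"
    and f_subset: "x \<in> P \<Longrightarrow> f x \<subseteq> x"
    and f_mono: "\<lbrakk>x \<in> P; y \<in> P; x \<subseteq> y\<rbrakk> \<Longrightarrow> f x \<subseteq> f y"
    and f_fixes_Q: "x \<in> Q \<Longrightarrow> f x = x"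
begin

text \<open>Lay the weights of the chain supporting t end to end on [0, 1], smallest set first, so
  that x occupies the interval from mass_below t x to mass_below t x + t x.  At time s the part
  of that interval lying in [0, s], of length moved_mass s t x, has been transferred to f x.\<close>

definition mass_below :: "('a set \<Rightarrow> real) \<Rightarrow> 'a set \<Rightarrow> real" where
  "mass_below t x = (\<Sum>z\<in>{z\<in>P. z \<subset> x}. t z)"

definition moved_mass :: "real \<Rightarrow> ('a set \<Rightarrow> real) \<Rightarrow> 'a set \<Rightarrow> real" where
  "moved_mass s t x = min (t x) (max 0 (s - mass_below t x))"

definition flow :: "real \<Rightarrow> ('a set \<Rightarrow> real) \<Rightarrow> 'a set \<Rightarrow> real" where
  "flow s t y = (\<Sum>x\<in>{x\<in>P. f x = y}. moved_mass s t x) + (t y - moved_mass s t y)"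

lemma mass_below_nonneg: "t \<in> realisation_points P \<Longrightarrow> 0 \<le> mass_below t x"
  unfolding mass_below_def by (rule sum_nonneg) (auto dest: realisation_pointsD)

lemma mass_below_add_le:
  assumes t: "t \<in> realisation_points P" and y: "y \<in> P" and "y \<subset> x"
  shows "mass_below t y + t y \<le> mass_below t x"
proof -
  have "mass_below t y + t y = sum t (insert y {z\<in>P. z \<subset> y})"
    unfolding mass_below_def using finite_P by (subst sum.insert) auto
  also have "\<dots> \<le> sum t {z\<in>P. z \<subset> x}"
    by (rule sum_mono2) (use finite_P y \<open>y \<subset> x\<close> realisation_pointsD(1)[OF t] in auto)
  finally show ?thesis unfolding mass_below_def .
qed

lemma mass_below_add_le_one:
  assumes t: "t \<in> realisation_points P"
  shows "mass_below t y + t y \<le> 1"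
proof (cases "y \<in> P")
  case True
  have "mass_below t y + t y = sum t (insert y {z\<in>P. z \<subset> y})"
    unfolding mass_below_def using finite_P by (subst sum.insert) auto
  also have "\<dots> \<le> sum t P"
    by (rule sum_mono2) (use finite_P True realisation_pointsD(1)[OF t] in auto)
  finally show ?thesis using realisation_pointsD(3)[OF t] by simp
next
  case False
  then have "mass_below t y \<le> sum t P" unfolding mass_below_def
    by (intro sum_mono2) (use finite_P realisation_pointsD(1)[OF t] in auto)
  then show ?thesis using realisation_pointsD(2,3)[OF t] False by simp
qed

lemma moved_mass_nonneg: "t \<in> realisation_points P \<Longrightarrow> 0 \<le> moved_mass s t x"
  unfolding moved_mass_def by (auto dest: realisation_pointsD)

lemma moved_mass_le: "moved_mass s t x \<le> t x"
  unfolding moved_mass_def by auto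

lemma moved_mass_eq_0: "t x = 0 \<Longrightarrow> moved_mass s t x = 0"
  unfolding moved_mass_def by auto

lemma moved_mass_at_0: "t \<in> realisation_points P \<Longrightarrow> moved_mass 0 t x = 0"
  unfolding moved_mass_def using mass_below_nonneg[of t x] realisation_pointsD(1)[of t P x] by auto

lemma moved_mass_at_1: "t \<in> realisation_points P \<Longrightarrow> moved_mass 1 t x = t x"
  unfolding moved_mass_def using mass_below_add_le_one[of t x] realisation_pointsD(1)[of t P x] by auto

lemma flow_at_0: "t \<in> realisation_points P \<Longrightarrow> flow 0 t = t"
  unfolding flow_def by (auto simp: moved_mass_at_0 fun_eq_iff)

lemma flow_fixes_realisation_points_Q:
  assumes t: "t \<in> realisation_points Q"
  shows "flow s t = t"
proof
  fix y
  have "(\<Sum>x\<in>P. if f x = y then moved_mass s t x else 0)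
      = (\<Sum>x\<in>P. if x = y then moved_mass s t x else 0)"
  proof (rule sum.cong)
    fix x assume "x \<in> P"
    show "(if f x = y then moved_mass s t x else 0) = (if x = y then moved_mass s t x else 0)"
    proof (cases "x \<in> Q")
      case True then show ?thesis using f_fixes_Q by auto
    next
      case False
      then show ?thesis using realisation_pointsD(2)[OF t] moved_mass_eq_0 by auto
    qed
  qed simp
  also have "\<dots> = moved_mass s t y"
  proof (cases "y \<in> P")
    case False
    then have "t y = 0" using Q_subset_P realisation_pointsD(2)[OF t] by blast
    then show ?thesis using False finite_P by (simp add: moved_mass_eq_0)
  qed (simp add: finite_P)
  finally show "flow s t y = t y"
    unfolding flow_def by (simp add: sum.inter_filter finite_P)
qed

lemma sum_flow:
  assumes "t \<in> realisation_points P"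
  shows "sum (flow s t) P = 1"
proof -
  have "sum (flow s t) P
      = (\<Sum>y\<in>P. \<Sum>x\<in>{x\<in>P. f x = y}. moved_mass s t x) + (\<Sum>y\<in>P. t y - moved_mass s t y)"
    unfolding flow_def by (simp add: sum.distrib)
  also have "(\<Sum>y\<in>P. \<Sum>x\<in>{x\<in>P. f x = y}. moved_mass s t x) = (\<Sum>x\<in>P. moved_mass s t x)"
    by (rule sum.group) (use finite_P f_into_Q Q_subset_P in auto)
  finally show ?thesis
    using realisation_pointsD(3)[OF assms] by (simp add: sum_subtractf)
qed

lemma flow_pos_cases:
  assumes t: "t \<in> realisation_points P" and "0 < flow s t y"
  shows "(\<exists>x\<in>P. f x = y \<and> 0 < t x \<and> mass_below t x < s) \<or>
    (0 < t y \<and> s < mass_below t y + t y)"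
proof (cases "(\<Sum>x\<in>{x\<in>P. f x = y}. moved_mass s t x) = 0")
  case True
  then have "0 < t y - moved_mass s t y" using assms(2) unfolding flow_def by simp
  then show ?thesis
    using realisation_pointsD(1)[OF t, of y] unfolding moved_mass_def
    by (auto simp: min_def max_def split: if_splits)
next
  case False
  then obtain x where "x \<in> {x\<in>P. f x = y}" "moved_mass s t x \<noteq> 0"
    by (rule sum.not_neutral_contains_not_neutral)
  moreover from this(2) have "0 < t x \<and> mass_below t x < s"
    using realisation_pointsD(1)[OF t, of x] unfolding moved_mass_def
    by (auto simp: min_def max_def split: if_splits)
  ultimately show ?thesis by blast
qed

lemma moved_subset_kept:
  assumes t: "t \<in> realisation_points P" and x: "x \<in> P" "0 < t x" "mass_below t x < s"
    and y: "0 < t y" "s < mass_below t y + t y"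
  shows "f x \<subseteq> y"
proof -
  have "y \<in> P" using t y(1) by (rule realisation_points_support)
  have "x \<subseteq> y \<or> y \<subseteq> x" using t x(2) y(1) by (rule realisation_points_support_chain)
  moreover have "\<not> y \<subset> x"
  proof
    assume "y \<subset> x"
    with mass_below_add_le[OF t \<open>y \<in> P\<close>] have "mass_below t y + t y \<le> mass_below t x" .
    then show False using x(3) y(2) by simp
  qed
  ultimately show ?thesis using f_subset[OF x(1)] by blast
qed

lemma flow_support_chain:
  assumes t: "t \<in> realisation_points P" and "0 < flow s t y1" "0 < flow s t y2"
  shows "y1 \<subseteq> y2 \<or> y2 \<subseteq> y1"
proof -
  note chain = realisation_points_support_chain[OF t]
  consider (moved) x1 where "x1 \<in> P" "f x1 = y1" "0 < t x1" "mass_below t x1 < s"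
    | (kept) "0 < t y1" "s < mass_below t y1 + t y1"
    using flow_pos_cases[OF t assms(2)] by blast
  then show ?thesis
  proof cases
    case moved
    from flow_pos_cases[OF t assms(3)] show ?thesis
    proof (elim disjE bexE conjE)
      fix x2 assume x2: "x2 \<in> P" "f x2 = y2" "0 < t x2"
      have "x1 \<subseteq> x2 \<or> x2 \<subseteq> x1" by (rule chain[OF moved(3) x2(3)])
      then show ?thesis using f_mono[OF moved(1) x2(1)] f_mono[OF x2(1) moved(1)] moved(2) x2(2) by blast
    next
      assume "0 < t y2" "s < mass_below t y2 + t y2"
      with moved_subset_kept[OF t moved(1,3,4)] have "f x1 \<subseteq> y2" .
      then show ?thesis using moved(2) by simp
    qed
  next
    case kept
    from flow_pos_cases[OF t assms(3)] show ?thesis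
    proof (elim disjE bexE conjE)
      fix x2 assume x2: "x2 \<in> P" "f x2 = y2" "0 < t x2" "mass_below t x2 < s"
      have "f x2 \<subseteq> y1" by (rule moved_subset_kept[OF t x2(1,3,4) kept])
      then show ?thesis using x2(2) by simp
    next
      assume "0 < t y2"
      then show ?thesis by (rule chain[OF kept(1)])
    qed
  qed
qed

lemma flow_in_realisation_points:
  assumes t: "t \<in> realisation_points P"
  shows "flow s t \<in> realisation_points P"
proof -
  have "0 \<le> flow s t y" for y
    unfolding flow_def using moved_mass_le[of s t y]
    by (intro add_nonneg_nonneg sum_nonneg moved_mass_nonneg[OF t]) simp
  moreover have "flow s t y = 0" if "y \<notin> P" for y
  proof -
    have none: "{x\<in>P. f x = y} = {}" using f_into_Q Q_subset_P that by auto
    show ?thesis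
      unfolding flow_def none using moved_mass_eq_0 realisation_pointsD(2)[OF t that] by simp
  qed
  ultimately show ?thesis
    unfolding realisation_points_def using sum_flow[OF t, of s] flow_support_chain[OF t, of s] by blast
qed

lemma flow_at_1_in_realisation_points_Q:
  assumes t: "t \<in> realisation_points P"
  shows "flow 1 t \<in> realisation_points Q"
proof -
  have flow_P: "flow 1 t \<in> realisation_points P" by (rule flow_in_realisation_points[OF t])
  have out: "flow 1 t y = 0" if "y \<notin> Q" for y
  proof -
    have none: "{x\<in>P. f x = y} = {}" using f_into_Q that by auto
    show ?thesis unfolding flow_def none using moved_mass_at_1[OF t] by simp
  qed
  have "sum (flow 1 t) Q = sum (flow 1 t) P"
    using finite_P Q_subset_P out by (intro sum.mono_neutral_left) auto
  then show ?thesis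
    using flow_P out Q_subset_P unfolding realisation_points_def by (simp add: subset_eq)
qed

lemma continuous_map_flow:
  "continuous_map (prod_topology (top_of_set {0..1}) (realisation P)) (realisation P)
     (\<lambda>p. flow (fst p) (snd p))"
proof -
  let ?Z = "prod_topology (top_of_set {0..1::real}) (realisation P)"
  have coord: "continuous_map ?Z euclideanreal (\<lambda>p. snd p x)" for x
    using continuous_map_compose[OF continuous_map_snd continuous_map_realisation_coordinate]
    by (simp add: o_def)
  have time: "continuous_map ?Z euclideanreal fst"
    using continuous_map_compose[OF continuous_map_fst continuous_map_from_subtopology[OF continuous_map_id]]
    by (simp add: o_def)
  have "continuous_map ?Z euclideanreal (\<lambda>p. mass_below (snd p) x)" for x
    unfolding mass_below_def by (intro continuous_map_sum coord) (simp add: finite_P)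
  then have "continuous_map ?Z euclideanreal (\<lambda>p. moved_mass (fst p) (snd p) x)" for x
    unfolding moved_mass_def
    by (intro continuous_map_real_min continuous_map_real_max continuous_map_diff coord time) simp
  then have "continuous_map ?Z (powertop_real UNIV) (\<lambda>p. flow (fst p) (snd p))"
    unfolding continuous_map_componentwise_UNIV flow_def
    by (intro allI continuous_map_add continuous_map_diff continuous_map_sum coord) (simp_all add: finite_P)
  moreover have "flow (fst p) (snd p) \<in> realisation_points P" if "p \<in> topspace ?Z" for p
    using that flow_in_realisation_points by (auto simp: mem_Times_iff)
  ultimately show ?thesis
    by (simp add: realisation_def continuous_map_in_subtopology image_subset_iff)
qed

theorem deformation_retract_realisation:
  "deformation_retract_space (realisation_points Q) (realisation P)"
proof -
  have QP: "realisation_points Q \<subseteq> realisation_points P"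
    by (rule realisation_points_mono[OF finite_P Q_subset_P])
  \<comment> \<open>homotopic_with asks for h (0, t) = t at every t, not only on the realisation\<close>
  define h where "h = (\<lambda>(s, t). if t \<in> realisation_points P then flow s t else t)"
  define r where "r t = h (1, t)" for t
  have h: "continuous_map (prod_topology (top_of_set {0..1}) (realisation P)) (realisation P) h"
    by (rule continuous_map_eq[OF continuous_map_flow]) (auto simp: h_def)
  have "homotopic_with (\<lambda>k. \<forall>x\<in>realisation_points Q. k x = x) (realisation P) (realisation P) id r"
    unfolding homotopic_with_def
  proof (intro exI conjI allI ballI)
    show "h (0, x) = id x" for x by (simp add: h_def flow_at_0)
    show "h (s, x) = x" if "x \<in> realisation_points Q" for s x
      using that QP flow_fixes_realisation_points_Q by (auto simp: h_def)
  qed (use h in \<open>simp_all add: r_def\<close>)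
  moreover have "retraction_maps (realisation P) (subtopology (realisation P) (realisation_points Q)) r id"
  proof -
    have "continuous_map (realisation P) (realisation P) r"
      unfolding r_def using continuous_map_compose[OF _ h, of _ "\<lambda>t. (1, t)"]
      by (simp add: o_def continuous_map_pairedI)
    moreover have "r ` realisation_points P \<subseteq> realisation_points Q"
      using flow_at_1_in_realisation_points_Q by (auto simp: r_def h_def)
    ultimately show ?thesis
      unfolding retraction_maps_def
      using QP flow_fixes_realisation_points_Q continuous_map_from_subtopology[OF continuous_map_id]
      by (auto simp: continuous_map_in_subtopology r_def h_def)
  qed
  ultimately show ?thesis
    unfolding deformation_retract_space_def using QP by auto
qed

end

section \<open>Cores of finite graphs\<close>

definition leafless :: "('e \<Rightarrow> 'v \<times> 'v) \<Rightarrow> 'e set \<Rightarrow> bool" where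
  "leafless ends K \<longleftrightarrow> (\<forall>v\<in>sub_verts ends K. 2 \<le> valence ends K v)"

definition core :: "('e \<Rightarrow> 'v \<times> 'v) \<Rightarrow> 'e set \<Rightarrow> 'e set" where
  "core ends H = \<Union>{K. K \<subseteq> H \<and> leafless ends K}"

lemma finite_sub_verts: "finite K \<Longrightarrow> finite (sub_verts ends K)"
  unfolding sub_verts_def endpoints_def by auto

lemma valence_mono: "\<lbrakk>K \<subseteq> H; finite H\<rbrakk> \<Longrightarrow> valence ends K v \<le> valence ends H v"
  unfolding valence_def by (intro add_mono card_mono) (auto intro: finite_subset)

lemma one_le_valence:
  assumes "finite H" "v \<in> sub_verts ends H"
  shows "1 \<le> valence ends H v"
proof -
  obtain e where "e \<in> H" "v = fst (ends e) \<or> v = snd (ends e)"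
    using assms(2) unfolding sub_verts_def endpoints_def by auto
  then have "{e\<in>H. fst (ends e) = v} \<noteq> {} \<or> {e\<in>H. snd (ends e) = v} \<noteq> {}" by auto
  then have "card {e\<in>H. fst (ends e) = v} \<noteq> 0 \<or> card {e\<in>H. snd (ends e) = v} \<noteq> 0"
    using assms(1) by auto
  then show ?thesis unfolding valence_def by auto
qed

lemma leafless_iff_no_valence_one:
  assumes "finite H"
  shows "leafless ends H \<longleftrightarrow> (\<forall>v\<in>sub_verts ends H. valence ends H v \<noteq> 1)"
proof -
  have "2 \<le> valence ends H v \<longleftrightarrow> valence ends H v \<noteq> 1" if "v \<in> sub_verts ends H" for v
    using one_le_valence[OF assms that] by linarith
  then show ?thesis unfolding leafless_def by blast
qed

lemma core_subset: "core ends H \<subseteq> H"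
  unfolding core_def by auto

lemma core_mono: "H \<subseteq> H' \<Longrightarrow> core ends H \<subseteq> core ends H'"
  unfolding core_def by auto

lemma leafless_subset_core: "\<lbrakk>K \<subseteq> H; leafless ends K\<rbrakk> \<Longrightarrow> K \<subseteq> core ends H"
  unfolding core_def by auto

lemma core_eq_self: "leafless ends H \<Longrightarrow> core ends H = H"
  by (rule antisym[OF core_subset leafless_subset_core[OF order_refl]])

lemma leafless_core:
  assumes "finite H"
  shows "leafless ends (core ends H)"
  unfolding leafless_def
proof
  fix v assume "v \<in> sub_verts ends (core ends H)"
  then obtain e where "e \<in> core ends H" "v \<in> endpoints ends e"
    unfolding sub_verts_def by auto
  then obtain K where K: "K \<subseteq> H" "leafless ends K" "e \<in> K" "v \<in> sub_verts ends K"
    unfolding core_def sub_verts_def by auto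
  then have "2 \<le> valence ends K v" unfolding leafless_def by auto
  also have "\<dots> \<le> valence ends (core ends H) v"
    using leafless_subset_core[OF K(1,2)] finite_subset[OF core_subset assms] by (rule valence_mono)
  finally show "2 \<le> valence ends (core ends H) v" .
qed

lemma leaf_edge:
  assumes "finite H" "v \<in> sub_verts ends H" "valence ends H v < 2"
  obtains e where "e \<in> H" "fst (ends e) \<noteq> snd (ends e)"
    "sub_verts ends (H - {e}) \<subseteq> sub_verts ends H - {v}"
proof -
  define A where "A = {e\<in>H. fst (ends e) = v}"
  define B where "B = {e\<in>H. snd (ends e) = v}"
  have fin: "finite A" "finite B" using assms(1) by (auto simp: A_def B_def)
  have "card A + card B = 1"
    using assms(3) one_le_valence[OF assms(1,2)] unfolding valence_def A_def B_def by simp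
  moreover have "card (A \<inter> B) \<le> card (A \<union> B)" using fin by (intro card_mono) auto
  ultimately have "card (A \<union> B) = 1" "card (A \<inter> B) = 0"
    using card_Un_Int[OF fin] by linarith+
  then obtain e where e: "A \<union> B = {e}" "A \<inter> B = {}"
    using fin by (metis One_nat_def card_1_singleton_iff card_0_eq finite_Int)
  have "e \<in> A \<union> B" using e(1) by blast
  show ?thesis
  proof (rule that)
    show "e \<in> H" using \<open>e \<in> A \<union> B\<close> unfolding A_def B_def by auto
    show "fst (ends e) \<noteq> snd (ends e)"
      using \<open>e \<in> A \<union> B\<close> e(2) unfolding A_def B_def by auto
    show "sub_verts ends (H - {e}) \<subseteq> sub_verts ends H - {v}"
    proof
      fix w assume "w \<in> sub_verts ends (H - {e})"
      then obtain g where g: "g \<in> H" "g \<noteq> e" "w \<in> endpoints ends g"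
        unfolding sub_verts_def by auto
      then have "g \<notin> A \<union> B" using e(1) by blast
      then have "w \<noteq> v" using g(1,3) unfolding A_def B_def endpoints_def by auto
      then show "w \<in> sub_verts ends H - {v}" using g(1,3) unfolding sub_verts_def by auto
    qed
  qed
qed

text \<open>Pruning a leaf preserves the inequality |V| \<le> |E| and the pruned graph cannot be
  a single edge; so pruning ends at a non-empty leafless subgraph.\<close>

lemma exists_leafless_subgraph:
  assumes "finite H" "H \<noteq> {}" "card (sub_verts ends H) \<le> card H"
  shows "\<exists>K\<subseteq>H. K \<noteq> {} \<and> leafless ends K"
  using assms
proof (induction "card H" arbitrary: H rule: less_induct)
  case less
  show ?case
  proof (cases "leafless ends H")
    case True
    then show ?thesis using less.prems by blast
  next
    case False
    then obtain v where v: "v \<in> sub_verts ends H" "valence ends H v < 2"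
      unfolding leafless_def by auto
    with less.prems(1) obtain e where e: "e \<in> H" "fst (ends e) \<noteq> snd (ends e)"
      and verts: "sub_verts ends (H - {e}) \<subseteq> sub_verts ends H - {v}"
      by (rule leaf_edge)
    have "card (sub_verts ends (H - {e})) < card (sub_verts ends H)"
      using verts v(1) finite_sub_verts[OF less.prems(1)] by (intro psubset_card_mono) auto
    then have count: "card (sub_verts ends (H - {e})) \<le> card (H - {e})"
      using less.prems(1,3) e(1) by simp
    have nonempty: "H - {e} \<noteq> {}"
    proof
      assume "H - {e} = {}"
      then have "H = {e}" using e(1) by auto
      then show False
        using less.prems(3) e(2) by (simp add: sub_verts_def endpoints_def)
    qed
    have "card (H - {e}) < card H" by (rule card_Diff1_less[OF less.prems(1) e(1)])
    from less.hyps[OF this finite_Diff[OF less.prems(1)] nonempty count]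
    show ?thesis by blast
  qed
qed

lemma component_subset: "C \<in> components ends K \<Longrightarrow> C \<subseteq> K"
  unfolding components_def by auto

lemma component_nonempty: "C \<in> components ends K \<Longrightarrow> C \<noteq> {}"
  unfolding components_def by auto

lemma exists_component: "K \<noteq> {} \<Longrightarrow> \<exists>C. C \<in> components ends K"
  unfolding components_def by auto

lemma component_closed_adjacent:
  assumes "C \<in> components ends K" "e \<in> C" "g \<in> K"
    "endpoints ends e \<inter> endpoints ends g \<noteq> {}"
  shows "g \<in> C"
proof -
  obtain e0 where C: "C = {f \<in> K. (e0, f) \<in> (edge_adj ends K)\<^sup>*}"
    using assms(1) unfolding components_def by auto
  then have "(e0, e) \<in> (edge_adj ends K)\<^sup>*" "(e, g) \<in> edge_adj ends K"
    using assms(2-4) unfolding edge_adj_def by auto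
  then show ?thesis using C assms(3) by auto
qed

lemma valence_component:
  assumes "C \<in> components ends K" "v \<in> sub_verts ends C"
  shows "valence ends C v = valence ends K v"
proof -
  obtain e where e: "e \<in> C" "v \<in> endpoints ends e"
    using assms(2) unfolding sub_verts_def by auto
  have "g \<in> C" if "g \<in> K" "v \<in> endpoints ends g" for g
    by (rule component_closed_adjacent[OF assms(1) e(1) that(1)]) (use e(2) that(2) in blast)
  then have "{g\<in>C. fst (ends g) = v} = {g\<in>K. fst (ends g) = v}"
    "{g\<in>C. snd (ends g) = v} = {g\<in>K. snd (ends g) = v}"
    using component_subset[OF assms(1)] unfolding endpoints_def by auto
  then show ?thesis unfolding valence_def by simp
qed

lemma sum_valence:
  assumes "finite C"
  shows "(\<Sum>v\<in>sub_verts ends C. valence ends C v) = 2 * card C"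
proof -
  have half: "(\<Sum>v\<in>sub_verts ends C. card {e\<in>C. p (ends e) = v}) = card C"
    if "p = fst \<or> p = snd" for p
  proof -
    have "(\<Sum>v\<in>sub_verts ends C. \<Sum>e\<in>{e\<in>C. p (ends e) = v}. 1::nat) = (\<Sum>e\<in>C. 1)"
      by (rule sum.group)
        (use assms finite_sub_verts that in \<open>auto simp: sub_verts_def endpoints_def\<close>)
    then show ?thesis by simp
  qed
  show ?thesis unfolding valence_def sum.distrib using half[of fst] half[of snd] by simp
qed

lemma nontrivial_pi1_component_leafless:
  assumes "finite K" "leafless ends K" "C \<in> components ends K"
  shows "nontrivial_pi1 ends C"
proof -
  have "2 * card (sub_verts ends C) = (\<Sum>v\<in>sub_verts ends C. 2)" by simp
  also have "\<dots> \<le> (\<Sum>v\<in>sub_verts ends C. valence ends C v)"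
  proof (rule sum_mono)
    fix v assume v: "v \<in> sub_verts ends C"
    then have "v \<in> sub_verts ends K"
      using component_subset[OF assms(3)] unfolding sub_verts_def by auto
    then show "2 \<le> valence ends C v"
      using assms(2) valence_component[OF assms(3) v] unfolding leafless_def by simp
  qed
  also have "\<dots> = 2 * card C"
    using component_subset[OF assms(3)] assms(1) by (intro sum_valence) (rule finite_subset)
  finally show ?thesis unfolding nontrivial_pi1_def by simp
qed

lemma core_nonempty:
  assumes "finite H" "C \<in> components ends H" "nontrivial_pi1 ends C"
  shows "core ends H \<noteq> {}"
proof -
  have "C \<subseteq> H" by (rule component_subset[OF assms(2)])
  moreover have "C \<noteq> {}" by (rule component_nonempty[OF assms(2)])
  moreover have "finite C" using \<open>C \<subseteq> H\<close> assms(1) by (rule finite_subset)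
  ultimately have "\<exists>K\<subseteq>C. K \<noteq> {} \<and> leafless ends K"
    using assms(3) unfolding nontrivial_pi1_def by (intro exists_leafless_subgraph)
  then obtain K where K: "K \<subseteq> C" "K \<noteq> {}" "leafless ends K" by blast
  with \<open>C \<subseteq> H\<close> have "K \<subseteq> core ends H" by (intro leafless_subset_core) auto
  then show ?thesis using K(2) by blast
qed

section \<open>The retraction of X(G) onto C(G)\<close>

lemma core_in_C_poset:
  assumes "finite E" "H \<in> X_poset ends E"
  shows "core ends H \<in> C_poset ends E"
proof -
  have H: "H \<subseteq> E" "H \<noteq> E" and "\<exists>C\<in>components ends H. nontrivial_pi1 ends C"
    using assms(2) unfolding X_poset_def by simp_all
  then obtain C where C: "C \<in> components ends H" "nontrivial_pi1 ends C" by blast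
  have "finite H" using H(1) assms(1) by (rule finite_subset)
  then have "core ends H \<noteq> {}" using C by (rule core_nonempty)
  moreover have "core ends H \<subset> E"
    using core_subset[of ends H] psubsetI[OF H] by (rule subset_psubset_trans)
  moreover have fin: "finite (core ends H)" using core_subset \<open>finite H\<close> by (rule finite_subset)
  moreover have leafless: "leafless ends (core ends H)" using \<open>finite H\<close> by (rule leafless_core)
  moreover have "\<forall>v\<in>sub_verts ends (core ends H). valence ends (core ends H) v \<noteq> 1"
    using leafless_iff_no_valence_one[OF fin] leafless by (rule iffD1)
  moreover have "\<forall>C\<in>components ends (core ends H). nontrivial_pi1 ends C"
    by (intro ballI nontrivial_pi1_component_leafless[OF fin leafless])
  ultimately show ?thesis unfolding C_poset_def core_subgraph_def psubset_eq by simp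
qed

lemma core_fixes_C_poset:
  assumes "finite E" "H \<in> C_poset ends E"
  shows "core ends H = H"
proof -
  have "H \<subseteq> E" using assms(2) unfolding C_poset_def core_subgraph_def by simp
  then have "finite H" using assms(1) by (rule finite_subset)
  then have "leafless ends H"
    using assms(2) unfolding leafless_iff_no_valence_one[OF \<open>finite H\<close>]
    unfolding C_poset_def core_subgraph_def by simp
  then show ?thesis by (rule core_eq_self)
qed

lemma C_poset_subset_X_poset: "C_poset ends E \<subseteq> X_poset ends E"
proof
  fix H assume "H \<in> C_poset ends E"
  then have H: "H \<subseteq> E" "H \<noteq> E" "H \<noteq> {}" "\<forall>C\<in>components ends H. nontrivial_pi1 ends C"
    unfolding C_poset_def core_subgraph_def by simp_all
  obtain C where C: "C \<in> components ends H" using exists_component[OF H(3)] ..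
  with H(4) have "nontrivial_pi1 ends C" by (rule bspec)
  with C have "\<exists>C\<in>components ends H. nontrivial_pi1 ends C" by blast
  with H(1-3) show "H \<in> X_poset ends E" unfolding X_poset_def by simp
qed

lemma finite_X_poset: "finite E \<Longrightarrow> finite (X_poset ends E)"
  by (rule finite_subset[of _ "Pow E"]) (auto simp: X_poset_def)

theorem lemma4:
  fixes V :: "'v set" and E :: "'e set" and ends :: "'e \<Rightarrow> 'v \<times> 'v"
  assumes "finite_graph V E ends"
  shows "deformation_retract_space (realisation_points (C_poset ends E))
           (realisation (X_poset ends E))"
proof -
  have "finite E" using assms unfolding finite_graph_def by simp
  interpret deflationary_retraction "X_poset ends E" "C_poset ends E" "core ends"
  proof
    show "finite (X_poset ends E)" using \<open>finite E\<close> by (rule finite_X_poset)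
    show "C_poset ends E \<subseteq> X_poset ends E" by (rule C_poset_subset_X_poset)
    show "core ends H \<in> C_poset ends E" if "H \<in> X_poset ends E" for H
      using \<open>finite E\<close> that by (rule core_in_C_poset)
    show "core ends H = H" if "H \<in> C_poset ends E" for H
      using \<open>finite E\<close> that by (rule core_fixes_C_poset)
  qed (simp_all add: core_subset core_mono)
  show ?thesis by (rule deformation_retract_realisation)
qed

end
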